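(* Let $n\ge2$ and $T=\alpha_0I+\alpha_1D+\cdots+\alpha_nD^n\in\mathcal L(\mathcal P_n)$ with $\alpha_0\ne0$. For every $f\in\mathcal P_n$ of degree at least $2$ with simple roots, $$\lim_{t\to+\infty}d_F\Bigl(Z\bigl(S(\alpha_1/\alpha_0)H(t)f\bigr),\,Z\bigl(TH(t)f\bigr)\Bigr)=0.$$
   Context: $\mathcal P_n$ is the complex vector space of polynomials of degree at most $n$, $D$ differentiation, $I$ identity. For $\beta\in\mathbb C$, $(S(\beta)f)(z)=f(\beta+z)$; for $t>0$, $(H(t)f)(z)=f(z/t)$. $Z(f)$ denotes the roots of $f$ counted with multiplicity. For multisets $A=\{u_1,\dots,u_m\}$, $B=\{v_1,\dots,v_m\}$ in $\mathbb C$, $d_F(A,B)=\min_{\sigma}\max_k|u_k-v_{\sigma(k)}|$ over permutations $\sigma$ of $\{1,\dots,m\}$. *)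

theory Defs
  imports "HOL-Analysis.Analysis" "HOL-Computational_Algebra.Computational_Algebra"
begin

definition shiftOp :: "complex \<Rightarrow> complex poly \<Rightarrow> complex poly" where
  "shiftOp \<beta> f = pcompose f [:\<beta>, 1:]"

definition dilOp :: "real \<Rightarrow> complex poly \<Rightarrow> complex poly" where
  "dilOp t f = pcompose f [:0, inverse (complex_of_real t):]"

definition diffOp :: "(nat \<Rightarrow> complex) \<Rightarrow> nat \<Rightarrow> complex poly \<Rightarrow> complex poly" where
  "diffOp \<alpha> n f = (\<Sum>k\<le>n. smult (\<alpha> k) ((pderiv ^^ k) f))"

text \<open>Matching distance d_F between multisets: minimum over all enumerations
  (equivalently over all permutations) of the maximal distance of matched points.\<close>
definition dF :: "complex multiset \<Rightarrow> complex multiset \<Rightarrow> real" where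
  "dF A B = Min {Max (insert 0 ((\<lambda>(u, v). cmod (u - v)) ` set (zip xs ys))) | xs ys.
                  mset xs = A \<and> mset ys = B}"

end

theory Submission
  imports Defs
begin

(* Let f have the simple roots z_1, ..., z_m (m = deg f >= 2) and put beta = alpha_1/alpha_0.
   For t > 0 the roots of S(beta) H(t) f are the points x_k = t z_k - beta; they are
   2 t delta-separated, where 2 delta is the minimal distance between roots of f.
   The polynomial q = T H(t) f has degree m and |lc q| = |alpha_0 lc f| / t^m, and
   q(x_k) = G_k(1/t) with the "residual" G_k(h) = sum_j alpha_j h^j f^(j)(z_k - h beta).
   Since G_k(0) = alpha_0 f(z_k) = 0 and G_k'(0) = (alpha_1 - alpha_0 beta) f'(z_k) = 0,
   t G_k(1/t) -> 0 as t -> infinity. *)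

lemma mset_distinct_roots_eq:
  fixes p :: "complex poly" and ys :: "complex list"
  assumes "p \<noteq> 0" "length ys = degree p" "distinct ys" "\<forall>y\<in>set ys. poly p y = 0"
  shows "mset ys = proots p"
proof -
  have sub: "mset ys \<subseteq># proots p"
    unfolding subseteq_mset_def
  proof
    fix x
    show "count (mset ys) x \<le> count (proots p) x"
    proof (cases "x \<in> set ys")
      case True
      have "count (mset ys) x \<le> 1" using assms(3) by (simp add: distinct_count_atmost_1)
      moreover have "x \<in># proots p" using True assms(1,4) by auto
      ultimately show ?thesis by (meson count_greater_eq_one_iff order_trans)
    next
      case False then show ?thesis by (metis count_mset_0_iff le0)
    qed
  qed
  have "size (mset ys) = size (proots p)" using assms(2) by (simp add: size_proots_complex)
  then show ?thesis using sub mset_subset_size subset_mset.le_less by fastforce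
qed

lemma rsquarefree_distinct_roots:
  fixes f :: "complex poly"
  assumes "rsquarefree f"
  obtains zs where "distinct zs" "mset zs = proots f"
proof -
  obtain zs where zs: "mset zs = proots f" using ex_mset by blast
  have at_most_1: "count (mset zs) a \<le> 1" for a
    using zs assms unfolding rsquarefree_def by (metis count_proots le_refl zero_le)
  have "distinct zs"
    unfolding distinct_count_atmost_1
  proof
    fix a
    show "count (mset zs) a = (if a \<in> set zs then 1 else 0)"
      using at_most_1[of a] count_mset_0_iff[of zs a] by (cases "count (mset zs) a") auto
  qed
  then show ?thesis using zs by (rule that)
qed

lemma finite_set_separated:
  fixes A :: "'a::metric_space set"
  assumes "finite A"
  obtains \<delta> where "\<delta> > 0" "\<And>x y. x \<in> A \<Longrightarrow> y \<in> A \<Longrightarrow> x \<noteq> y \<Longrightarrow> 2 * \<delta> \<le> dist x y"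
proof -
  define S where "S = (\<lambda>(x, y). dist x y) ` {p \<in> A \<times> A. fst p \<noteq> snd p}"
  have "finite S" unfolding S_def using assms by auto
  moreover have "\<forall>s\<in>S. 0 < s" unfolding S_def by auto
  ultimately have "Min (insert 1 S) > 0" by simp
  moreover have "Min (insert 1 S) \<le> dist x y" if "x \<in> A" "y \<in> A" "x \<noteq> y" for x y
  proof -
    have "dist x y \<in> S" unfolding S_def using that by (auto intro!: image_eqI[of _ _ "(x, y)"])
    then show ?thesis using \<open>finite S\<close> by simp
  qed
  ultimately show ?thesis using that[of "Min (insert 1 S) / 2"] by simp
qed

lemma dF_le_enumeration:
  assumes "mset xs = A" "mset ys = B"
  shows "dF A B \<le> Max (insert 0 ((\<lambda>(u, v). cmod (u - v)) ` set (zip xs ys)))"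
    and "0 \<le> dF A B"
proof -
  define M where "M = {Max (insert 0 ((\<lambda>(u, v). cmod (u - v)) ` set (zip xs ys))) | xs ys.
                  mset xs = A \<and> mset ys = B}"
  define L where "L = {xs. set xs \<subseteq> set_mset A \<and> length xs = size A} \<times>
                      {ys. set ys \<subseteq> set_mset B \<and> length ys = size B}"
  have "M \<subseteq> (\<lambda>(xs, ys). Max (insert 0 ((\<lambda>(u, v). cmod (u - v)) ` set (zip xs ys)))) ` L"
    unfolding M_def L_def by (auto intro!: image_eqI)
  moreover have "finite L" unfolding L_def
    by (intro finite_cartesian_product finite_lists_length_eq) auto
  ultimately have fin: "finite M" by (meson finite_imageI finite_subset)
  have mem: "Max (insert 0 ((\<lambda>(u, v). cmod (u - v)) ` set (zip xs ys))) \<in> M"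
    unfolding M_def using assms by blast
  have "\<forall>x\<in>M. 0 \<le> x" unfolding M_def by (auto intro: Max_ge)
  then show "0 \<le> dF A B" unfolding dF_def M_def[symmetric] using fin mem
    by (metis Min_in empty_iff)
  show "dF A B \<le> Max (insert 0 ((\<lambda>(u, v). cmod (u - v)) ` set (zip xs ys)))"
    unfolding dF_def M_def[symmetric] using fin mem by (rule Min_le)
qed

lemma dF_nonneg: "0 \<le> dF A B"
proof -
  obtain xs ys where "mset xs = A" "mset ys = B" using ex_mset by metis
  then show ?thesis by (rule dF_le_enumeration(2))
qed

lemma prod_mset_dist_lower:
  fixes a :: complex and D :: real
  assumes "0 \<le> D" "\<forall>r\<in>#R. D \<le> cmod (a - r)"
  shows "D ^ size R \<le> cmod (\<Prod>r\<in>#R. (a - r))"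
  using assms(2)
proof (induction R)
  case empty then show ?case by simp
next
  case (add x R)
  then have "D ^ size R \<le> cmod (\<Prod>r\<in>#R. (a - r))" "D \<le> cmod (a - x)" by auto
  then have "D * D ^ size R \<le> cmod (a - x) * cmod (\<Prod>r\<in>#R. (a - r))"
    using assms(1) by (simp add: mult_mono)
  then show ?case by (simp add: norm_mult)
qed

lemma poly_eq_lead_coeff_prod_roots:
  fixes q :: "complex poly"
  shows "poly q w = lead_coeff q * (\<Prod>r\<in>#proots q. (w - r))"
proof -
  have "poly q w = poly (smult (lead_coeff q) (\<Prod>x\<in>#proots q. [:-x, 1:])) w"
    by (simp only: complex_poly_decompose_multiset)
  then show ?thesis by (simp add: poly_prod_mset)
qed

lemma root_near_small_value:
  fixes q :: "complex poly"
  assumes "\<rho> > 0" "cmod (poly q x) < cmod (lead_coeff q) * \<rho> ^ degree q"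
  shows "\<exists>r\<in>#proots q. cmod (x - r) < \<rho>"
proof (rule ccontr)
  assume "\<not> ?thesis"
  then have "\<forall>r\<in>#proots q. \<rho> \<le> cmod (x - r)" by (auto simp: not_less)
  then have "\<rho> ^ degree q \<le> cmod (\<Prod>r\<in>#proots q. (x - r))"
    using prod_mset_dist_lower[of \<rho> "proots q" x] assms(1) by (simp add: size_proots_complex)
  then have "cmod (lead_coeff q) * \<rho> ^ degree q \<le> cmod (poly q x)"
    unfolding poly_eq_lead_coeff_prod_roots[of q x] norm_mult by (simp add: mult_left_mono)
  with assms(2) show False by simp
qed

lemma isolated_root_distance:
  fixes q :: "complex poly"
  assumes split: "proots q = add_mset r R" and "\<rho> \<ge> 0" "\<forall>r'\<in>#R. \<rho> \<le> cmod (x - r')"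
  shows "cmod (lead_coeff q) * \<rho> ^ (degree q - 1) * cmod (x - r) \<le> cmod (poly q x)"
proof -
  have "size R = degree q - 1"
    using arg_cong[OF split, of size] by (simp add: size_proots_complex)
  then have "\<rho> ^ (degree q - 1) \<le> cmod (\<Prod>r'\<in>#R. (x - r'))"
    using prod_mset_dist_lower[OF assms(2,3)] by simp
  then have "cmod (lead_coeff q) * \<rho> ^ (degree q - 1) * cmod (x - r)
               \<le> cmod (lead_coeff q) * cmod (\<Prod>r'\<in>#R. (x - r')) * cmod (x - r)"
    by (intro mult_right_mono mult_left_mono) auto
  also have "\<dots> = cmod (poly q x)"
    unfolding poly_eq_lead_coeff_prod_roots[of q x] split by (simp add: norm_mult)
  finally show ?thesis .
qed

lemma separated_points_root_matching:
  fixes q :: "complex poly" and xs :: "complex list"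
  assumes "q \<noteq> 0" "degree q = length xs" "distinct xs" "\<rho> > 0"
    and sep: "\<And>x y. x \<in> set xs \<Longrightarrow> y \<in> set xs \<Longrightarrow> x \<noteq> y \<Longrightarrow> 2 * \<rho> \<le> cmod (x - y)"
    and small: "\<And>x. x \<in> set xs \<Longrightarrow> cmod (poly q x) < cmod (lead_coeff q) * \<rho> ^ degree q"
  obtains rr where "mset (map rr xs) = proots q" "\<And>x. x \<in> set xs \<Longrightarrow> cmod (x - rr x) < \<rho>"
proof -
  obtain rr where rr: "\<And>x. x \<in> set xs \<Longrightarrow> rr x \<in># proots q \<and> cmod (x - rr x) < \<rho>"
    using root_near_small_value[OF assms(4) small] by metis
  have "inj_on rr (set xs)"
  proof (rule inj_onI, rule ccontr)
    fix x y assume xy: "x \<in> set xs" "y \<in> set xs" "rr x = rr y" "x \<noteq> y"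
    have "cmod (x - y) \<le> cmod (x - rr x) + cmod (y - rr y)"
      using norm_triangle_ineq4[of "x - rr x" "y - rr y"] xy(3) by simp
    also have "\<dots> < 2 * \<rho>" using rr[OF xy(1)] rr[OF xy(2)] by simp
    finally show False using sep[OF xy(1,2,4)] by simp
  qed
  then have "distinct (map rr xs)" using assms(3) by (simp add: distinct_map)
  then have "mset (map rr xs) = proots q"
    using assms(1,2) rr by (intro mset_distinct_roots_eq) auto
  then show ?thesis by (rule that) (use rr in blast)
qed

lemma dF_separated_points_roots:
  fixes q :: "complex poly" and xs :: "complex list"
  assumes "q \<noteq> 0" "degree q = length xs" "distinct xs" "\<rho> > 0" "\<epsilon> > 0"
    and sep: "\<And>x y. x \<in> set xs \<Longrightarrow> y \<in> set xs \<Longrightarrow> x \<noteq> y \<Longrightarrow> 2 * \<rho> \<le> cmod (x - y)"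
    and small: "\<And>x. x \<in> set xs \<Longrightarrow>
                  cmod (poly q x) < cmod (lead_coeff q) * \<rho> ^ (degree q - 1) * min \<epsilon> \<rho>"
  shows "dF (mset xs) (proots q) < \<epsilon>"
proof -
  have "cmod (poly q x) < cmod (lead_coeff q) * \<rho> ^ degree q" if "x \<in> set xs" for x
  proof -
    have "degree q > 0" using that assms(2) by (cases xs) auto
    then have "\<rho> ^ degree q = \<rho> ^ (degree q - 1) * \<rho>" by (metis power_minus_mult)
    then have "\<rho> ^ (degree q - 1) * min \<epsilon> \<rho> \<le> \<rho> ^ degree q"
      using assms(4) by (simp add: mult_left_mono)
    then have "cmod (lead_coeff q) * \<rho> ^ (degree q - 1) * min \<epsilon> \<rho>
                 \<le> cmod (lead_coeff q) * \<rho> ^ degree q"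
      by (simp add: mult.assoc mult_left_mono)
    then show ?thesis using small[OF that] by linarith
  qed
  then obtain rr where mrr: "mset (map rr xs) = proots q"
    and near: "\<And>x. x \<in> set xs \<Longrightarrow> cmod (x - rr x) < \<rho>"
    using separated_points_root_matching[OF assms(1-4) sep] by blast
  have close: "cmod (x - rr x) < \<epsilon>" if x: "x \<in> set xs" for x
  proof -
    have "mset xs = add_mset x (mset (remove1 x xs))" using x by simp
    then have rest: "proots q = add_mset (rr x) (mset (map rr (remove1 x xs)))"
      using mrr by (metis image_mset_add_mset mset_map)
    have "\<rho> \<le> cmod (x - r')" if r': "r' \<in># mset (map rr (remove1 x xs))" for r'
    proof -
      obtain y where y: "y \<in> set xs" "y \<noteq> x" "r' = rr y"
        using r' assms(3) unfolding set_mset_mset by (auto simp: set_remove1_eq)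
      have "2 * \<rho> \<le> cmod (x - y)" using sep[OF x y(1)] y(2) by simp
      also have "\<dots> \<le> cmod (x - r') + cmod (y - r')"
        using norm_triangle_ineq4[of "x - r'" "y - r'"] by simp
      finally show ?thesis using near[OF y(1)] y(3) by simp
    qed
    then have "cmod (lead_coeff q) * \<rho> ^ (degree q - 1) * cmod (x - rr x) \<le> cmod (poly q x)"
      using isolated_root_distance[OF rest] assms(4) by simp
    with small[OF x] have "(cmod (lead_coeff q) * \<rho> ^ (degree q - 1)) * cmod (x - rr x)
                             < (cmod (lead_coeff q) * \<rho> ^ (degree q - 1)) * min \<epsilon> \<rho>"
      by linarith
    moreover have "cmod (lead_coeff q) * \<rho> ^ (degree q - 1) > 0" using assms(1,4) by simp
    ultimately show ?thesis by (simp add: mult_less_cancel_left_pos)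
  qed
  have "set (zip xs (map rr xs)) = (\<lambda>x. (x, rr x)) ` set xs" by (induction xs) auto
  then have "Max (insert 0 ((\<lambda>(u, v). cmod (u - v)) ` set (zip xs (map rr xs)))) < \<epsilon>"
    using assms(5) close by simp
  then show ?thesis using dF_le_enumeration(1)[OF refl mrr] by (rule le_less_trans[rotated])
qed

lemma higher_pderiv_dilate:
  fixes c :: complex
  shows "(pderiv ^^ j) (pcompose f [:0, c:]) = smult (c ^ j) (pcompose ((pderiv ^^ j) f) [:0, c:])"
  by (induction j) (simp_all add: pderiv_smult pderiv_pcompose pderiv_pCons mult.commute)

lemma degree_higher_pderiv: "degree ((pderiv ^^ j) (p :: complex poly)) = degree p - j"
  by (induction j) (auto simp: degree_pderiv)

text \<open>\<open>T\<close> preserves the degree of nonconstant polynomials when \<open>\<alpha>\<^sub>0 \<noteq> 0\<close>, since all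
  derivative terms have lower degree; the leading coefficient gets multiplied by \<open>\<alpha>\<^sub>0\<close>.\<close>
lemma diffOp_degree_lead_coeff:
  fixes g :: "complex poly"
  assumes "\<alpha> 0 \<noteq> 0" "degree g \<ge> 1"
  shows "degree (diffOp \<alpha> n g) = degree g" and "lead_coeff (diffOp \<alpha> n g) = \<alpha> 0 * lead_coeff g"
proof -
  have split: "diffOp \<alpha> n g = smult (\<alpha> 0) g + (\<Sum>j\<in>{1..n}. smult (\<alpha> j) ((pderiv ^^ j) g))"
    unfolding diffOp_def by (simp add: atMost_atLeast0 sum.atLeast_Suc_atMost)
  have "degree (\<Sum>j\<in>{1..n}. smult (\<alpha> j) ((pderiv ^^ j) g)) \<le> degree g - 1"
    by (rule degree_sum_le)
       (auto intro: order_trans[OF degree_smult_le] simp: degree_higher_pderiv)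
  then have "degree (\<Sum>j\<in>{1..n}. smult (\<alpha> j) ((pderiv ^^ j) g)) < degree (smult (\<alpha> 0) g)"
    using assms by simp
  then show "degree (diffOp \<alpha> n g) = degree g" and "lead_coeff (diffOp \<alpha> n g) = \<alpha> 0 * lead_coeff g"
    unfolding split using assms(1) by (simp_all add: degree_add_eq_left lead_coeff_add_le coeff_eq_0)
qed

lemma dilOp_degree_lead_coeff:
  assumes "t \<noteq> 0"
  shows "degree (dilOp t f) = degree f"
    and "lead_coeff (dilOp t f) = lead_coeff f * inverse (of_real t) ^ degree f"
  using assms unfolding dilOp_def by (simp add: degree_pcompose, subst lead_coeff_comp, auto)

text \<open>The residual \<open>G(h) = \<Sum>\<^sub>j \<alpha>\<^sub>j h\<^sup>j f\<^sup>(\<^sup>j\<^sup>)(z - h \<beta>)\<close>, the value of \<open>T H(t) f\<close>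
  at the point \<open>t z - \<beta>\<close> written in terms of \<open>h = 1/t\<close>.\<close>
definition residual :: "(nat \<Rightarrow> complex) \<Rightarrow> nat \<Rightarrow> complex poly \<Rightarrow> complex \<Rightarrow> complex
                          \<Rightarrow> complex \<Rightarrow> complex" where
  "residual \<alpha> n f \<beta> z h = (\<Sum>j\<le>n. \<alpha> j * h ^ j * poly ((pderiv ^^ j) f) (z - h * \<beta>))"

lemma poly_diffOp_dilOp:
  assumes "t \<noteq> 0"
  shows "poly (diffOp \<alpha> n (dilOp t f)) (of_real t * z - \<beta>)
           = residual \<alpha> n f \<beta> z (inverse (of_real t))"
proof -
  have "(of_real t * z - \<beta>) * inverse (complex_of_real t) = z - inverse (of_real t) * \<beta>"
    using assms by (simp add: algebra_simps)
  then show ?thesis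
    unfolding diffOp_def dilOp_def residual_def
    by (simp add: poly_sum higher_pderiv_dilate poly_pcompose mult.assoc)
qed

lemma affine_image_separated:
  fixes t \<delta> :: real
  assumes "t > 0" "distinct zs"
    and sep: "\<And>z z'. z \<in> set zs \<Longrightarrow> z' \<in> set zs \<Longrightarrow> z \<noteq> z' \<Longrightarrow> 2 * \<delta> \<le> dist z z'"
  shows "distinct (map (\<lambda>z. of_real t * z - \<beta>) zs)"
    and "\<And>x y. x \<in> set (map (\<lambda>z. of_real t * z - \<beta>) zs) \<Longrightarrow> y \<in> set (map (\<lambda>z. of_real t * z - \<beta>) zs)
           \<Longrightarrow> x \<noteq> y \<Longrightarrow> 2 * (t * \<delta>) \<le> cmod (x - y)"
proof -
  show "distinct (map (\<lambda>z. of_real t * z - \<beta>) zs)"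
    using assms(1,2) by (simp add: distinct_map inj_on_def)
  fix x y assume xy: "x \<in> set (map (\<lambda>z. of_real t * z - \<beta>) zs)"
    "y \<in> set (map (\<lambda>z. of_real t * z - \<beta>) zs)" "x \<noteq> y"
  then obtain z z' where z: "z \<in> set zs" "z' \<in> set zs" "x = of_real t * z - \<beta>" "y = of_real t * z' - \<beta>"
    by auto
  have "x - y = of_real t * (z - z')" unfolding z(3,4) by (simp add: algebra_simps)
  then show "2 * (t * \<delta>) \<le> cmod (x - y)"
    using sep[OF z(1,2)] xy(3) z(3,4) assms(1) by (auto simp: norm_mult dist_norm)
qed

lemma proots_shiftOp_dilOp:
  fixes f :: "complex poly"
  assumes "t > 0" "f \<noteq> 0" "distinct zs" "mset zs = proots f"
  shows "proots (shiftOp \<beta> (dilOp t f)) = mset (map (\<lambda>z. of_real t * z - \<beta>) zs)"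
proof (rule mset_distinct_roots_eq[symmetric])
  have "degree (shiftOp \<beta> (dilOp t f)) = degree f"
    unfolding shiftOp_def dilOp_def using assms(1) by (simp add: degree_pcompose)
  then show "length (map (\<lambda>z. of_real t * z - \<beta>) zs) = degree (shiftOp \<beta> (dilOp t f))"
    using assms(4) by (metis length_map size_mset size_proots_complex)
  show "shiftOp \<beta> (dilOp t f) \<noteq> 0"
    unfolding shiftOp_def dilOp_def using assms(1,2) by (simp add: pcompose_eq_0_iff)
  show "distinct (map (\<lambda>z. of_real t * z - \<beta>) zs)"
    using assms(1,3) by (simp add: distinct_map inj_on_def)
  have "poly f z = 0" if "z \<in> set zs" for z
    using that assms(2,4) by (metis set_count_proots set_mset_mset mem_Collect_eq)
  moreover have "poly (shiftOp \<beta> (dilOp t f)) (of_real t * z - \<beta>) = poly f z" for z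
    unfolding shiftOp_def dilOp_def using assms(1) by (simp add: poly_pcompose field_simps)
  ultimately show "\<forall>y\<in>set (map (\<lambda>z. of_real t * z - \<beta>) zs). poly (shiftOp \<beta> (dilOp t f)) y = 0"
    by auto
qed

text \<open>Derivative at \<open>0\<close> of a single term of the residual; it vanishes unless \<open>j \<le> 1\<close>.\<close>
lemma residual_term_deriv:
  fixes Q :: "complex poly" and a z \<beta> :: complex
  shows "((\<lambda>h. a * h ^ j * poly Q (z - h * \<beta>)) has_field_derivative
     a * (of_nat j * 0 ^ (j - 1) * poly Q z + 0 ^ j * (poly (pderiv Q) z * (-\<beta>)))) (at 0)"
proof -
  have "((\<lambda>h. z - h * \<beta>) has_field_derivative (-\<beta>)) (at 0)"
    by (auto intro!: derivative_eq_intros)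
  from DERIV_chain'[OF this, of "poly Q"]
  have P: "((\<lambda>h. poly Q (z - h * \<beta>)) has_field_derivative (poly (pderiv Q) z * (-\<beta>))) (at 0)"
    by simp
  have W: "((\<lambda>h::complex. h ^ j) has_field_derivative of_nat j * 0 ^ (j - 1)) (at 0)"
    using DERIV_power[OF DERIV_ident, of j "0::complex"] by simp
  show ?thesis using DERIV_cmult[OF DERIV_mult[OF W P], of a] by (simp add: algebra_simps)
qed

lemma residual_vanishes_to_second_order:
  assumes "n \<ge> 1" "\<alpha> 0 \<noteq> 0" "poly f z = 0" "\<beta> = \<alpha> 1 / \<alpha> 0"
  shows "residual \<alpha> n f \<beta> z 0 = 0"
    and "(residual \<alpha> n f \<beta> z has_field_derivative 0) (at 0)"
proof -
  show "residual \<alpha> n f \<beta> z 0 = 0"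
    using assms(3) unfolding residual_def by (auto simp: power_0_left intro!: sum.neutral)
  have term_value: "\<alpha> j * (of_nat j * 0 ^ (j - 1) * poly ((pderiv ^^ j) f) z
                + 0 ^ j * (poly (pderiv ((pderiv ^^ j) f)) z * (-\<beta>)))
           = (if j = 0 then - \<alpha> 0 * \<beta> * poly (pderiv f) z else 0)
           + (if j = 1 then \<alpha> 1 * poly (pderiv f) z else 0)" for j
    by (cases "j \<le> 1") (auto simp: le_Suc_eq power_0_left)
  have "(residual \<alpha> n f \<beta> z has_field_derivative
          (\<Sum>j\<le>n. \<alpha> j * (of_nat j * 0 ^ (j - 1) * poly ((pderiv ^^ j) f) z
                + 0 ^ j * (poly (pderiv ((pderiv ^^ j) f)) z * (-\<beta>))))) (at 0)"
    unfolding residual_def[abs_def] by (rule DERIV_sum, rule residual_term_deriv)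
  moreover have "(\<Sum>j\<le>n. \<alpha> j * (of_nat j * 0 ^ (j - 1) * poly ((pderiv ^^ j) f) z
                + 0 ^ j * (poly (pderiv ((pderiv ^^ j) f)) z * (-\<beta>))))
      = (\<alpha> 1 - \<alpha> 0 * \<beta>) * poly (pderiv f) z"
    unfolding term_value sum.distrib using assms(1) by (simp add: algebra_simps)
  moreover have "\<alpha> 1 - \<alpha> 0 * \<beta> = 0" using assms(2,4) by simp
  ultimately show "(residual \<alpha> n f \<beta> z has_field_derivative 0) (at 0)" by simp
qed

lemma scaled_limit_of_second_order_zero:
  fixes G :: "complex \<Rightarrow> complex"
  assumes "G 0 = 0" "(G has_field_derivative 0) (at 0)"
  shows "((\<lambda>t::real. of_real t * G (inverse (of_real t))) \<longlongrightarrow> 0) at_top"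
proof -
  have lim0: "((\<lambda>h. G h / h) \<longlongrightarrow> 0) (at 0)"
    using assms by (simp add: has_field_derivative_iff)
  have "((\<lambda>t::real. complex_of_real (inverse t)) \<longlongrightarrow> of_real 0) at_top"
    by (intro tendsto_of_real tendsto_inverse_0_at_top filterlim_ident)
  moreover have "\<forall>\<^sub>F t in at_top. inverse (complex_of_real t) \<noteq> 0"
    using eventually_gt_at_top[of "0::real"] by eventually_elim simp
  ultimately have "filterlim (\<lambda>t::real. inverse (complex_of_real t)) (at 0) at_top"
    by (simp add: filterlim_at of_real_inverse)
  from filterlim_compose[OF lim0 this] show ?thesis by (simp add: divide_inverse mult.commute)
qed

lemma residual_limit_at_root:
  fixes \<alpha> :: "nat \<Rightarrow> complex"
  assumes "n \<ge> 1" "\<alpha> 0 \<noteq> 0" "poly f z = 0"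
  shows "((\<lambda>t. of_real t * residual \<alpha> n f (\<alpha> 1 / \<alpha> 0) z (inverse (of_real t))) \<longlongrightarrow> 0) at_top"
  using residual_vanishes_to_second_order[where \<alpha>=\<alpha>, OF assms refl] by (rule scaled_limit_of_second_order_zero)

lemma dF_at_fixed_scale:
  fixes t \<delta> \<epsilon> :: real and f :: "complex poly" and \<alpha> :: "nat \<Rightarrow> complex"
  defines "\<beta> \<equiv> \<alpha> 1 / \<alpha> 0"
  defines "B \<equiv> cmod (\<alpha> 0 * lead_coeff f) * \<delta> ^ (degree f - 1) * min \<epsilon> \<delta>"
  assumes "t \<ge> 1" "\<alpha> 0 \<noteq> 0" "degree f \<ge> 1" "\<delta> > 0" "\<epsilon> > 0"
    and zs: "distinct zs" "mset zs = proots f"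
    and sep: "\<And>z z'. z \<in> set zs \<Longrightarrow> z' \<in> set zs \<Longrightarrow> z \<noteq> z' \<Longrightarrow> 2 * \<delta> \<le> dist z z'"
    and small: "\<And>z. z \<in> set zs \<Longrightarrow> cmod (of_real t * residual \<alpha> n f \<beta> z (inverse (of_real t))) < B"
  shows "dF (proots (shiftOp \<beta> (dilOp t f))) (proots (diffOp \<alpha> n (dilOp t f))) < \<epsilon>"
proof -
  define m where "m = degree f"
  define q where "q = diffOp \<alpha> n (dilOp t f)"
  define xs where "xs = map (\<lambda>z. of_real t * z - \<beta>) zs"
  have f0: "f \<noteq> 0" using assms(5) by auto
  have t0: "t \<noteq> 0" using assms(3) by simp
  have deg1: "degree (dilOp t f) \<ge> 1" using dilOp_degree_lead_coeff(1)[OF t0] assms(5) by simp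
  have dq: "degree q = m"
    unfolding q_def m_def diffOp_degree_lead_coeff(1)[where \<alpha>=\<alpha>, OF assms(4) deg1] dilOp_degree_lead_coeff(1)[OF t0] ..
  have "lead_coeff q = \<alpha> 0 * lead_coeff (dilOp t f)"
    unfolding q_def by (rule diffOp_degree_lead_coeff(2)[where \<alpha>=\<alpha>, OF assms(4) deg1])
  then have lq: "cmod (lead_coeff q) = cmod (\<alpha> 0 * lead_coeff f) / t ^ m"
    unfolding dilOp_degree_lead_coeff(2)[OF t0] m_def using assms(3)
    by (simp add: norm_mult norm_power norm_inverse divide_inverse power_inverse)
  have lxs: "length xs = m" unfolding xs_def m_def using zs(2)
    by (metis length_map size_mset size_proots_complex)
  have "dF (mset xs) (proots q) < \<epsilon>"
  proof (rule dF_separated_points_roots)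
    show "q \<noteq> 0" using dq assms(5) m_def by auto
    show "degree q = length xs" using dq lxs by simp
    show "t * \<delta> > 0" using assms(3,6) by simp
    have "t > 0" using assms(3) by simp
    from affine_image_separated[OF this zs(1) sep]
    show "distinct xs" "\<And>x y. x \<in> set xs \<Longrightarrow> y \<in> set xs \<Longrightarrow> x \<noteq> y \<Longrightarrow> 2 * (t * \<delta>) \<le> cmod (x - y)"
      unfolding xs_def by blast+
    show "cmod (poly q x) < cmod (lead_coeff q) * (t * \<delta>) ^ (degree q - 1) * min \<epsilon> (t * \<delta>)"
      if x: "x \<in> set xs" for x
    proof -
      obtain z where z: "z \<in> set zs" "x = of_real t * z - \<beta>" using x unfolding xs_def by auto
      have tm: "t ^ m = t * t ^ (m - 1)"
        using assms(5) m_def power_minus_mult[of m t] by (simp add: mult.commute)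
      have "cmod (lead_coeff q) * (t * \<delta>) ^ (degree q - 1) = cmod (\<alpha> 0 * lead_coeff f) * \<delta> ^ (m - 1) / t"
        unfolding lq unfolding dq power_mult_distrib tm using assms(3) by (simp add: field_simps)
      then have "cmod (lead_coeff q) * (t * \<delta>) ^ (degree q - 1) * min \<epsilon> (t * \<delta>)
                   = cmod (\<alpha> 0 * lead_coeff f) * \<delta> ^ (m - 1) * min \<epsilon> (t * \<delta>) / t"
        by simp
      moreover have "min \<epsilon> \<delta> \<le> min \<epsilon> (t * \<delta>)"
        using assms(3,6) by (simp add: mult_le_cancel_right1 min.coboundedI2)
      then have "B / t \<le> cmod (\<alpha> 0 * lead_coeff f) * \<delta> ^ (m - 1) * min \<epsilon> (t * \<delta>) / t"
        unfolding B_def m_def using assms(3,6)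
        by (intro divide_right_mono mult_left_mono) auto
      moreover have "cmod (poly q x) < B / t"
        using small[OF z(1)] assms(3) poly_diffOp_dilOp[of t \<alpha> n f z \<beta>]
        unfolding q_def z(2) by (simp add: norm_mult field_simps)
      ultimately show ?thesis by simp
    qed
  qed (use assms(7) in simp)
  then show ?thesis
    using proots_shiftOp_dilOp[of t f zs \<beta>] assms(3) f0 zs unfolding q_def xs_def by simp
qed

theorem corollary4p5:
  fixes n :: nat and \<alpha> :: "nat \<Rightarrow> complex" and f :: "complex poly"
  assumes "n \<ge> 2" and "\<alpha> 0 \<noteq> 0"
    and "degree f \<le> n" and "degree f \<ge> 2" and "rsquarefree f"
  shows "((\<lambda>t. dF (proots (shiftOp (\<alpha> 1 / \<alpha> 0) (dilOp t f)))
                   (proots (diffOp \<alpha> n (dilOp t f)))) \<longlongrightarrow> 0) at_top"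
proof -
  have f0: "f \<noteq> 0" using assms(4) by auto
  obtain zs where zs: "distinct zs" "mset zs = proots f"
    using rsquarefree_distinct_roots[OF assms(5)] .
  have roots: "poly f z = 0" if "z \<in> set zs" for z
    using that zs(2) f0 by (metis set_count_proots set_mset_mset mem_Collect_eq)
  obtain \<delta> where \<delta>: "\<delta> > 0"
    and sep: "\<And>z z'. z \<in> set zs \<Longrightarrow> z' \<in> set zs \<Longrightarrow> z \<noteq> z' \<Longrightarrow> 2 * \<delta> \<le> dist z z'"
    using finite_set_separated[of "set zs"] by blast
  show ?thesis unfolding tendsto_iff
  proof (intro allI impI)
    fix \<epsilon> :: real assume \<epsilon>: "\<epsilon> > 0"
    define B where "B = cmod (\<alpha> 0 * lead_coeff f) * \<delta> ^ (degree f - 1) * min \<epsilon> \<delta>"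
    have "B > 0" unfolding B_def using f0 assms(2) \<delta> \<epsilon> by simp
    then have "\<forall>\<^sub>F t in at_top. \<forall>z\<in>set zs.
                 cmod (of_real t * residual \<alpha> n f (\<alpha> 1 / \<alpha> 0) z (inverse (of_real t))) < B"
      using residual_limit_at_root[where \<alpha>=\<alpha>, OF _ assms(2) roots] assms(1)
      by (intro eventually_ball_finite) (auto simp: tendsto_iff)
    with eventually_ge_at_top[of "1::real"]
    show "\<forall>\<^sub>F t in at_top. dist (dF (proots (shiftOp (\<alpha> 1 / \<alpha> 0) (dilOp t f)))
                   (proots (diffOp \<alpha> n (dilOp t f)))) 0 < \<epsilon>"
      by eventually_elim
         (use dF_at_fixed_scale[of _ \<alpha> f \<delta> \<epsilon> zs n] dF_nonneg assms(2,4) \<delta> \<epsilon> zs sep in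
           \<open>auto simp: B_def dist_real_def\<close>)
  qed
qed

end
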